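(* Fix integers $2\le d\le n$ and $m\ge1$, and let $\lambda=\log n+m\log(1-d/n)$. Then \[ \mathbb{P}(H^*_{nmd}\text{ is disconnected})\ \le\ e^{\lambda}+\sum_{r=1}^\infty e^{(\lambda+5)r}+(2/e)^n. \]
   Context: $H^*_{nmd}$ is the random hypergraph on node set $\{1,\dots,n\}$ whose hyperedge set is $\{V_1,\dots,V_m\}$, with $V_1,\dots,V_m$ mutually independent uniformly random $d$-element subsets of $\{1,\dots,n\}$. A hypergraph on node set $V$ is connected if for every partition of $V$ into nonempty sets $V_1',V_2'$ some hyperedge meets both; otherwise disconnected. Conventions $\log0=-\infty$, $e^{-\infty}=0$; the series may equal $+\infty$. *)

theory Defs
  imports "HOL-Probability.Probability"
begin

definition hg_connected :: "'a set \<Rightarrow> 'a set set \<Rightarrow> bool" where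
  "hg_connected V E \<longleftrightarrow>
     (\<forall>V1 V2. V1 \<noteq> {} \<longrightarrow> V2 \<noteq> {} \<longrightarrow> V1 \<inter> V2 = {} \<longrightarrow> V1 \<union> V2 = V \<longrightarrow>
        (\<exists>e\<in>E. e \<inter> V1 \<noteq> {} \<and> e \<inter> V2 \<noteq> {}))"

definition random_dsubset :: "nat \<Rightarrow> nat \<Rightarrow> nat set pmf" where
  "random_dsubset n d = pmf_of_set {S. S \<subseteq> {1..n} \<and> card S = d}"

definition H_star :: "nat \<Rightarrow> nat \<Rightarrow> nat \<Rightarrow> nat set set pmf" where
  "H_star n m d = map_pmf (\<lambda>V. V ` {1..m}) (Pi_pmf {1..m} {} (\<lambda>_. random_dsubset n d))"

text \<open>e^lambda with lambda = log n + m log(1 - d/n), using log 0 = -inf, e^(-inf) = 0.\<close>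
definition exp_lambda :: "nat \<Rightarrow> nat \<Rightarrow> nat \<Rightarrow> real" where
  "exp_lambda n m d = real n * (1 - real d / real n) ^ m"

end

theory Submission
  imports Defs
begin

text \<open>
  A disconnected hypergraph has a cut (S, V - S) with 1 <= s = |S| <= n/2 that no hyperedge
  crosses. A uniform d-set fails to cross it with probability
  (C(s,d) + C(n-s,d)) / C(n,d) <= (1 - d/n)^k, where k = s(n-s)/(n-1): for d = 2 this is
  Bernoulli's inequality, and raising d by one multiplies the left side by at most
  1 - min(s, n-s)/(n-d) <= (1 - 1/(n-d))^k, which telescopes. With Q = (1 - d/n)^m the union
  bound over cuts gives sum_s C(n,s) Q^k. The term s = 1 is nQ = e^lambda; when
  e^(lambda+5) <= 1, every term with s >= 2 is at most e^(lambda+5) 2^(-s), because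
  n^((s-1)/(n-1)) <= s and C(n,s) s^s <= e^s n^s; otherwise the bound exceeds 1.
\<close>

lemma Bernoulli_inequality_powr:
  fixes x k :: real
  assumes "-1 \<le> x" and "1 \<le> k"
  shows "1 + k * x \<le> (1 + x) powr k"
proof (cases "x = -1")
  case True
  then show ?thesis using assms by simp
next
  case False
  define A where "A = (1 + x) powr k"
  have "A > 0" using False assms by (simp add: A_def)
  have "1 + x = A powr (1/k) * 1 powr (1 - 1/k)"
    using assms False by (simp add: A_def powr_powr)
  also have "\<dots> \<le> (1/k) * A + (1 - 1/k) * 1"
    by (rule Youngs_inequality_0) (use assms \<open>A > 0\<close> in auto)
  finally have "k * (1 + x) \<le> k * ((1/k) * A + (1 - 1/k))"
    using assms by (simp add: mult_left_mono)
  then show ?thesis using assms by (simp add: A_def algebra_simps)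
qed

lemma powr_power_commute:
  fixes x a :: real
  assumes "0 \<le> x"
  shows "(x powr a) ^ n = (x ^ n) powr a"
proof (cases "x = 0")
  case True
  then show ?thesis by (cases n) auto
next
  case False
  then show ?thesis
    using assms by (simp add: powr_power powr_realpow[symmetric] powr_powr mult.commute)
qed

lemma binomial_Suc_mult_real:
  "real (a choose Suc j) * (real j + 1) = real (a choose j) * (real a - real j)"
  using gbinomial_mult_1[of "real a" j] by (simp add: binomial_gbinomial algebra_simps)

lemma power_div_fact_le_exp:
  fixes x :: real
  assumes "0 \<le> x"
  shows "x ^ s / fact s \<le> exp x"
proof -
  have "x ^ s / fact s \<le> (\<Sum>i\<le>s. x ^ i / fact i)"
    by (rule member_le_sum) (use assms in auto)
  also have "\<dots> \<le> exp x"
    using assms summable_exp_generic[of x]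
    by (auto simp: exp_def divide_inverse ac_simps intro!: sum_le_suminf)
  finally show ?thesis .
qed

lemma binomial_mult_power_le_exp:
  "real (n choose s) * real s ^ s \<le> exp (real s) * real n ^ s"
proof -
  have "real (n choose s) * real s ^ s \<le> real (n choose s) * (exp (real s) * fact s)"
    using power_div_fact_le_exp[of "real s" s]
    by (intro mult_left_mono) (simp_all add: divide_le_eq)
  also have "\<dots> = exp (real s) * real ((n choose s) * fact s)" by simp
  also have "\<dots> \<le> exp (real s) * real (n ^ s)"
    using binomial_fact_pow[of n s]
    by (intro mult_left_mono) (simp_all only: of_nat_le_iff exp_ge_zero)
  finally show ?thesis by simp
qed

definition uncrossed_fraction :: "nat \<Rightarrow> nat \<Rightarrow> nat \<Rightarrow> real" where
  "uncrossed_fraction n s j = (real (s choose j) + real ((n - s) choose j)) / real (n choose j)"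

definition cut_exponent :: "nat \<Rightarrow> nat \<Rightarrow> real" where
  "cut_exponent n s = real s * real (n - s) / real (n - 1)"

lemma one_le_cut_exponent:
  assumes "1 \<le> s" and "s < n"
  shows "1 \<le> cut_exponent n s"
proof -
  have "0 \<le> (real s - 1) * (real n - real s - 1)" using assms by simp
  then show ?thesis using assms by (simp add: cut_exponent_def of_nat_diff field_simps)
qed

lemma cut_exponent_le_min:
  assumes "1 \<le> s" and "s < n"
  shows "cut_exponent n s \<le> real (min s (n - s))"
proof -
  have "real s * (real n - real s) \<le> real s * (real n - 1)"
    and "real s * (real n - real s) \<le> (real n - real s) * (real n - 1)"
    using assms by (simp_all add: mult_left_mono mult_right_mono)
  then show ?thesis using assms by (auto simp: cut_exponent_def min_def of_nat_diff field_simps)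
qed

lemma uncrossed_fraction_two:
  assumes "1 \<le> s" and "s < n"
  shows "uncrossed_fraction n s 2 = 1 - cut_exponent n s * (2 / real n)"
proof -
  have choose_two: "real (a choose 2) = real a * (real a - 1) / 2" for a
    using binomial_Suc_mult_real[of a 1] by (simp add: numeral_2_eq_2 field_simps)
  show ?thesis
    using assms unfolding uncrossed_fraction_def cut_exponent_def choose_two
    by (simp add: of_nat_diff field_simps)
qed

lemma uncrossed_fraction_Suc_le:
  assumes "j < n" and "s \<le> n"
  shows "uncrossed_fraction n s (Suc j)
           \<le> uncrossed_fraction n s j * (1 - real (min s (n - s)) / (real n - real j))"
proof -
  define \<mu> where "\<mu> = real (min s (n - s))"
  define c\<^sub>1 c\<^sub>2 where "c\<^sub>1 = real (s choose j)" and "c\<^sub>2 = real ((n - s) choose j)"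
  have c: "real (n choose j) > 0" and t: "real n - real j > 0" using assms by simp_all
  have choose_Suc: "real (a choose Suc j) = real (a choose j) * (real a - real j) / (real j + 1)" for a
    using binomial_Suc_mult_real[of a j] by (simp add: field_simps)
  have "uncrossed_fraction n s (Suc j)
        = (c\<^sub>1 * (real s - real j) / (real j + 1) + c\<^sub>2 * (real n - real s - real j) / (real j + 1))
            / (real (n choose j) * (real n - real j) / (real j + 1))"
    using assms unfolding uncrossed_fraction_def choose_Suc c\<^sub>1_def c\<^sub>2_def
    by (simp add: of_nat_diff)
  also have "\<dots> = (c\<^sub>1 * (real s - real j) + c\<^sub>2 * (real n - real s - real j))
            / (real (n choose j) * (real n - real j))"
    by (simp add: add_divide_distrib[symmetric])
  also have "\<dots> \<le> (c\<^sub>1 + c\<^sub>2) * (real n - real j - \<mu>) / (real (n choose j) * (real n - real j))"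
  proof (rule divide_right_mono)
    have "\<mu> \<le> real n - real s" and "\<mu> \<le> real s" using assms by (simp_all add: \<mu>_def of_nat_diff)
    then have "c\<^sub>1 * (real s - real j) \<le> c\<^sub>1 * (real n - real j - \<mu>)"
      and "c\<^sub>2 * (real n - real s - real j) \<le> c\<^sub>2 * (real n - real j - \<mu>)"
      by (simp_all add: c\<^sub>1_def c\<^sub>2_def mult_left_mono)
    then show "c\<^sub>1 * (real s - real j) + c\<^sub>2 * (real n - real s - real j)
                 \<le> (c\<^sub>1 + c\<^sub>2) * (real n - real j - \<mu>)"
      by (simp add: algebra_simps)
  qed (use c t in simp)
  also have "\<dots> = uncrossed_fraction n s j * (1 - \<mu> / (real n - real j))"
    using c t by (simp add: uncrossed_fraction_def c\<^sub>1_def c\<^sub>2_def field_simps)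
  finally show ?thesis unfolding \<mu>_def .
qed

lemma uncrossed_fraction_le_powr:
  assumes "2 \<le> d" and "d \<le> n" and "1 \<le> s" and "s < n"
  shows "uncrossed_fraction n s d \<le> (1 - real d / real n) powr cut_exponent n s"
  using assms(1,2)
proof (induction d rule: dec_induct)
  case base
  have "uncrossed_fraction n s 2 = 1 + cut_exponent n s * (- 2 / real n)"
    using uncrossed_fraction_two[OF assms(3,4)] by simp
  also have "\<dots> \<le> (1 + - 2 / real n) powr cut_exponent n s"
    using base one_le_cut_exponent[OF assms(3,4)] by (intro Bernoulli_inequality_powr) auto
  finally show ?case by simp
next
  case (step j)
  define k where "k = cut_exponent n s"
  have t: "real n - real j > 0" using step by simp
  have "uncrossed_fraction n s (Suc j)
        \<le> uncrossed_fraction n s j * (1 - real (min s (n - s)) / (real n - real j))"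
    using step assms by (intro uncrossed_fraction_Suc_le) auto
  also have "\<dots> \<le> uncrossed_fraction n s j * (1 + k * (- 1 / (real n - real j)))"
    using cut_exponent_le_min[OF assms(3,4)] t
    by (intro mult_left_mono) (simp_all add: k_def uncrossed_fraction_def divide_right_mono)
  also have "\<dots> \<le> uncrossed_fraction n s j * (1 + - 1 / (real n - real j)) powr k"
    using one_le_cut_exponent[OF assms(3,4)] t
    by (intro mult_left_mono Bernoulli_inequality_powr) (simp_all add: k_def uncrossed_fraction_def)
  also have "\<dots> \<le> (1 - real j / real n) powr k * (1 + - 1 / (real n - real j)) powr k"
    using step by (intro mult_right_mono) (simp_all add: k_def)
  also have "\<dots> = ((1 - real j / real n) * (1 + - 1 / (real n - real j))) powr k"
    using t by (subst powr_mult) (auto simp: field_simps)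
  also have "(1 - real j / real n) * (1 + - 1 / (real n - real j)) = 1 - real (Suc j) / real n"
    using t by (simp add: field_simps)
  finally show ?case by (simp add: k_def)
qed

lemma binomial_mult_powr_one_minus_cut_exponent_le:
  assumes "2 \<le> s" and "2 * s \<le> n"
  defines "N \<equiv> exp 5 * real n"
  shows "real (n choose s) * N powr (1 - cut_exponent n s) \<le> N * (1/2) ^ s"
proof -
  define \<theta> where "\<theta> = (real s - 1) / (real n - 1)"
  have n: "4 \<le> n" and "0 < N" using assms by (simp_all add: N_def)
  have "0 \<le> \<theta>" and "\<theta> \<le> 1/2" using assms n by (auto simp: \<theta>_def field_simps)
  have exponent: "1 - cut_exponent n s = 1 - real s + real s * \<theta>"
    using assms n by (simp add: cut_exponent_def \<theta>_def of_nat_diff field_simps)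
  have "real n powr \<theta> = real n powr \<theta> * 1 powr (1 - \<theta>)" by simp
  also have "\<dots> \<le> \<theta> * real n + (1 - \<theta>) * 1"
    by (rule Youngs_inequality_0) (use n \<open>0 \<le> \<theta>\<close> \<open>\<theta> \<le> 1/2\<close> in auto)
  also have "\<dots> = \<theta> * (real n - 1) + 1" by (simp add: algebra_simps)
  also have "\<dots> = real s" using n by (simp add: \<theta>_def)
  finally have "real n powr \<theta> \<le> real s" .
  moreover have "exp 5 powr \<theta> \<le> exp (5/2)" using \<open>\<theta> \<le> 1/2\<close> by (simp add: powr_def)
  ultimately have N_powr_\<theta>: "N powr \<theta> \<le> exp (5/2) * real s"
    by (simp add: N_def powr_mult mult_mono)
  have "N powr (1 - cut_exponent n s) = N * (N powr \<theta>) ^ s / N ^ s"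
    using \<open>0 < N\<close> unfolding exponent
    by (simp add: powr_add powr_diff powr_power powr_realpow mult.commute)
  also have "\<dots> \<le> N * (exp (5/2) * real s) ^ s / N ^ s"
    using \<open>0 < N\<close> N_powr_\<theta> by (intro divide_right_mono mult_left_mono power_mono) auto
  finally have "real (n choose s) * N powr (1 - cut_exponent n s)
                  \<le> real (n choose s) * (N * (exp (5/2) * real s) ^ s / N ^ s)"
    by (rule mult_left_mono) simp
  also have "\<dots> = N * (real (n choose s) * real s ^ s) * (exp (5/2) / exp 5) ^ s / real n ^ s"
    by (simp add: N_def power_mult_distrib power_divide)
  also have "\<dots> \<le> N * (exp (real s) * real n ^ s) * (exp (5/2) / exp 5) ^ s / real n ^ s"
    using \<open>0 < N\<close> binomial_mult_power_le_exp[of n s]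
    by (intro divide_right_mono mult_right_mono mult_left_mono) auto
  also have "\<dots> = N * (exp 1 * (exp (5/2) / exp 5)) ^ s"
    using n exp_of_nat_mult[of s "1::real"] by (simp add: power_mult_distrib power_divide)
  also have "exp 1 * (exp (5/2) / exp 5) = exp (- 3/2 :: real)"
    by (simp flip: exp_add exp_diff)
  also have "N * exp (- 3/2) ^ s \<le> N * (1/2) ^ s"
    using \<open>0 < N\<close> exp_ge_add_one_self[of "3/2"]
    by (intro mult_left_mono power_mono) (simp_all add: exp_minus field_simps)
  finally show ?thesis .
qed

lemma binomial_mult_powr_cut_exponent_le:
  assumes "2 \<le> s" and "2 * s \<le> n" and "0 \<le> Q" and "Q * (exp 5 * real n) \<le> 1"
  shows "real (n choose s) * Q powr cut_exponent n s \<le> Q * (exp 5 * real n) * (1/2) ^ s"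
proof -
  define N where "N = exp 5 * real n"
  define k where "k = cut_exponent n s"
  have "0 < N" and "1 \<le> k"
    using assms one_le_cut_exponent[of s n] by (simp_all add: N_def k_def)
  have "Q powr k = Q * Q powr (k - 1)"
    using \<open>0 \<le> Q\<close> by (cases "Q = 0") (auto simp: powr_mult_base)
  also have "\<dots> \<le> Q * (1 / N) powr (k - 1)"
    using assms \<open>0 < N\<close> \<open>1 \<le> k\<close>
    by (intro mult_left_mono powr_mono2) (simp_all add: N_def field_simps)
  also have "(1 / N) powr (k - 1) = N powr (1 - k)"
    using \<open>0 < N\<close> by (simp add: powr_divide powr_minus_divide[symmetric])
  finally have "real (n choose s) * Q powr k \<le> real (n choose s) * (Q * N powr (1 - k))"
    by (rule mult_left_mono) simp
  also have "\<dots> = Q * (real (n choose s) * N powr (1 - k))" by simp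
  also have "\<dots> \<le> Q * (N * (1/2) ^ s)"
    using assms binomial_mult_powr_one_minus_cut_exponent_le[of s n]
    by (intro mult_left_mono) (simp_all add: N_def k_def)
  finally show ?thesis by (simp add: N_def k_def)
qed

lemma sum_binomial_mult_powr_cut_exponent_le:
  assumes "2 \<le> n" and "0 \<le> Q" and "Q * (exp 5 * real n) \<le> 1"
  shows "(\<Sum>s=1..n div 2. real (n choose s) * Q powr cut_exponent n s)
           \<le> real n * Q + Q * (exp 5 * real n)"
proof -
  have "(\<Sum>s=2..n div 2. real (n choose s) * Q powr cut_exponent n s)
          \<le> (\<Sum>s=2..n div 2. Q * (exp 5 * real n) * (1/2) ^ s)"
    using assms by (intro sum_mono binomial_mult_powr_cut_exponent_le) auto
  also have "\<dots> = Q * (exp 5 * real n) * (\<Sum>s=2..n div 2. (1/2) ^ s)"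
    by (simp add: sum_distrib_left)
  also have "(\<Sum>s=2..n div 2. (1/2::real) ^ s) \<le> 1/2"
    using sum_gp_multiplied[of 2 "n div 2" "1/2::real"] assms
    by (cases "2 \<le> n div 2") (simp_all add: power2_eq_square)
  finally have "(\<Sum>s=2..n div 2. real (n choose s) * Q powr cut_exponent n s)
                 \<le> Q * (exp 5 * real n) * (1/2)"
    using assms by (simp add: mult_left_mono)
  moreover have "(\<Sum>s=1..n div 2. real (n choose s) * Q powr cut_exponent n s)
      = real n * Q + (\<Sum>s=2..n div 2. real (n choose s) * Q powr cut_exponent n s)"
  proof -
    have "cut_exponent n 1 = 1" using assms by (simp add: cut_exponent_def)
    moreover have "1 \<le> n div 2" using assms by simp
    ultimately show ?thesis
      using assms by (simp add: sum.atLeast_Suc_atMost numeral_2_eq_2)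
  qed
  moreover have "0 \<le> Q * (exp 5 * real n)" using assms by simp
  ultimately show ?thesis by linarith
qed

definition crosses :: "'a set \<Rightarrow> 'a set \<Rightarrow> 'a set \<Rightarrow> bool" where
  "crosses V S T \<longleftrightarrow> T \<inter> S \<noteq> {} \<and> T \<inter> (V - S) \<noteq> {}"

lemma not_hg_connected_imp_uncrossed_cut:
  assumes "\<not> hg_connected V E" and "finite V"
  shows "\<exists>S\<subseteq>V. S \<noteq> {} \<and> 2 * card S \<le> card V \<and> (\<forall>T\<in>E. \<not> crosses V S T)"
proof -
  from assms obtain V\<^sub>1 V\<^sub>2 where ne: "V\<^sub>1 \<noteq> {}" "V\<^sub>2 \<noteq> {}" and partition: "V\<^sub>1 \<inter> V\<^sub>2 = {}" "V\<^sub>1 \<union> V\<^sub>2 = V"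
    and "\<not> (\<exists>T\<in>E. T \<inter> V\<^sub>1 \<noteq> {} \<and> T \<inter> V\<^sub>2 \<noteq> {})"
    unfolding hg_connected_def by blast
  then have uncrossed: "\<forall>T\<in>E. T \<inter> V\<^sub>1 = {} \<or> T \<inter> V\<^sub>2 = {}" by blast
  have "finite V\<^sub>1" "finite V\<^sub>2" using \<open>finite V\<close> unfolding partition(2)[symmetric] by simp_all
  then have card_V: "card V\<^sub>1 + card V\<^sub>2 = card V"
    using partition by (metis card_Un_disjoint)
  obtain S where S: "S = V\<^sub>1 \<or> S = V\<^sub>2" and "2 * card S \<le> card V"
  proof (cases "2 * card V\<^sub>1 \<le> card V")
    case False
    with card_V show ?thesis by (intro that[of V\<^sub>2]) auto
  qed (use that in blast)
  have "V - V\<^sub>1 = V\<^sub>2" "V - V\<^sub>2 = V\<^sub>1" using partition by auto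
  show ?thesis
  proof (intro exI[of _ S] conjI ballI)
    fix T assume "T \<in> E"
    with S uncrossed \<open>V - V\<^sub>1 = V\<^sub>2\<close> \<open>V - V\<^sub>2 = V\<^sub>1\<close> show "\<not> crosses V S T"
      by (auto simp: crosses_def)
  qed (use S ne partition \<open>2 * card S \<le> card V\<close> in auto)
qed

lemma prob_random_dsubset_not_crosses:
  assumes "1 \<le> d" and "d \<le> n" and "S \<subseteq> {1..n}"
  shows "measure_pmf.prob (random_dsubset n d) {T. \<not> crosses {1..n} S T}
           = uncrossed_fraction n (card S) d"
proof -
  define D where "D = {T. T \<subseteq> {1..n} \<and> card T = d}"
  define D\<^sub>1 where "D\<^sub>1 = {T. T \<subseteq> S \<and> card T = d}"
  define D\<^sub>2 where "D\<^sub>2 = {T. T \<subseteq> {1..n} - S \<and> card T = d}"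
  have "finite S" using assms finite_subset by blast
  have "card D = n choose d" "card D\<^sub>1 = card S choose d" "card D\<^sub>2 = (n - card S) choose d"
    using n_subsets[of "{1..n}" d] n_subsets[OF \<open>finite S\<close>, of d] n_subsets[of "{1..n} - S" d]
      card_Diff_subset[OF \<open>finite S\<close> assms(3)]
    by (simp_all add: D_def D\<^sub>1_def D\<^sub>2_def)
  have "finite D" "finite D\<^sub>1" "finite D\<^sub>2"
    using \<open>finite S\<close> by (auto simp: D_def D\<^sub>1_def D\<^sub>2_def intro: finite_subset[of _ "Pow {1..n}"])
  have "D \<noteq> {}" using \<open>card D = n choose d\<close> \<open>d \<le> n\<close> by auto
  have "D \<inter> {T. \<not> crosses {1..n} S T} = D\<^sub>1 \<union> D\<^sub>2"
    using assms(3) by (auto simp: D_def D\<^sub>1_def D\<^sub>2_def crosses_def)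
  moreover have "D\<^sub>1 \<inter> D\<^sub>2 \<subseteq> {T. T = {} \<and> card T = d}" by (auto simp: D\<^sub>1_def D\<^sub>2_def)
  then have "D\<^sub>1 \<inter> D\<^sub>2 = {}" using \<open>1 \<le> d\<close> by auto
  ultimately have "card (D \<inter> {T. \<not> crosses {1..n} S T}) = card D\<^sub>1 + card D\<^sub>2"
    by (simp add: card_Un_disjoint \<open>finite D\<^sub>1\<close> \<open>finite D\<^sub>2\<close>)
  then show ?thesis
    unfolding random_dsubset_def D_def[symmetric] measure_pmf_of_set[OF \<open>D \<noteq> {}\<close> \<open>finite D\<close>]
    using \<open>card D = _\<close> \<open>card D\<^sub>1 = _\<close> \<open>card D\<^sub>2 = _\<close> by (simp add: uncrossed_fraction_def)
qed

lemma prob_not_hg_connected_le_sum: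
  assumes "1 \<le> d" and "d \<le> n"
  shows "measure_pmf.prob (H_star n m d) {E. \<not> hg_connected {1..n} E}
           \<le> (\<Sum>s=1..n div 2. real (n choose s) * uncrossed_fraction n s d ^ m)"
proof -
  define M where "M = Pi_pmf {1..m} {} (\<lambda>_. random_dsubset n d)"
  define cuts where "cuts = {S. S \<subseteq> {1..n} \<and> S \<noteq> {} \<and> 2 * card S \<le> n}"
  define uncrossed where "uncrossed S = Pi {1..m} (\<lambda>_. {T. \<not> crosses {1..n} S T})" for S
  have "finite cuts" unfolding cuts_def by (rule finite_subset[of _ "Pow {1..n}"]) auto
  have "measure_pmf.prob (H_star n m d) {E. \<not> hg_connected {1..n} E}
          = measure_pmf.prob M {V. \<not> hg_connected {1..n} (V ` {1..m})}"
    unfolding H_star_def M_def by simp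
  also have "\<dots> \<le> measure_pmf.prob M (\<Union>S\<in>cuts. uncrossed S)"
  proof (rule measure_pmf.finite_measure_mono)
    show "{V. \<not> hg_connected {1..n} (V ` {1..m})} \<subseteq> (\<Union>S\<in>cuts. uncrossed S)"
    proof
      fix V assume "V \<in> {V. \<not> hg_connected {1..n} (V ` {1..m})}"
      then obtain S where "S \<subseteq> {1..n}" "S \<noteq> {}" "2 * card S \<le> n"
        and "\<forall>T\<in>V ` {1..m}. \<not> crosses {1..n} S T"
        using not_hg_connected_imp_uncrossed_cut[of "{1..n}" "V ` {1..m}"] by auto
      then show "V \<in> (\<Union>S\<in>cuts. uncrossed S)" by (auto simp: cuts_def uncrossed_def)
    qed
  qed simp
  also have "\<dots> \<le> (\<Sum>S\<in>cuts. measure_pmf.prob M (uncrossed S))"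
    by (rule measure_pmf.finite_measure_subadditive_finite[OF \<open>finite cuts\<close>]) simp
  also have "\<dots> = (\<Sum>S\<in>cuts. uncrossed_fraction n (card S) d ^ m)"
  proof (rule sum.cong[OF refl])
    fix S assume "S \<in> cuts"
    then have "S \<subseteq> {1..n}" by (simp add: cuts_def)
    then show "measure_pmf.prob M (uncrossed S) = uncrossed_fraction n (card S) d ^ m"
      using prob_random_dsubset_not_crosses[OF assms]
      by (simp add: M_def uncrossed_def measure_Pi_pmf_Pi)
  qed
  also have "\<dots> = (\<Sum>s=1..n div 2. \<Sum>S | S \<subseteq> {1..n} \<and> card S = s. uncrossed_fraction n s d ^ m)"
  proof -
    have "cuts = (\<Union>s\<in>{1..n div 2}. {S. S \<subseteq> {1..n} \<and> card S = s})"
      by (auto simp: cuts_def card_gt_0_iff Suc_le_eq dest: rev_finite_subset[OF finite_atLeastAtMost])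
    then have "(\<Sum>S\<in>cuts. uncrossed_fraction n (card S) d ^ m)
        = (\<Sum>s=1..n div 2. \<Sum>S | S \<subseteq> {1..n} \<and> card S = s. uncrossed_fraction n (card S) d ^ m)"
      by (simp only:) (rule sum.UNION_disjoint, auto intro: finite_subset[of _ "Pow {1..n}"])
    then show ?thesis by simp
  qed
  also have "\<dots> = (\<Sum>s=1..n div 2. real (n choose s) * uncrossed_fraction n s d ^ m)"
    by (simp add: n_subsets)
  finally show ?thesis .
qed

lemma prob_not_hg_connected_le:
  assumes "2 \<le> d" and "d \<le> n"
  shows "measure_pmf.prob (H_star n m d) {E. \<not> hg_connected {1..n} E}
           \<le> exp_lambda n m d + exp_lambda n m d * exp 5"
proof -
  define q where "q = 1 - real d / real n"
  define Q where "Q = q ^ m"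
  have "0 \<le> q" using assms by (simp add: q_def)
  then have "0 \<le> Q" by (simp add: Q_def)
  have \<lambda>: "exp_lambda n m d = real n * Q" by (simp add: exp_lambda_def Q_def q_def)
  show ?thesis
  proof (cases "Q * (exp 5 * real n) \<le> 1")
    case True
    have "measure_pmf.prob (H_star n m d) {E. \<not> hg_connected {1..n} E}
            \<le> (\<Sum>s=1..n div 2. real (n choose s) * uncrossed_fraction n s d ^ m)"
      using assms by (intro prob_not_hg_connected_le_sum) auto
    also have "\<dots> \<le> (\<Sum>s=1..n div 2. real (n choose s) * Q powr cut_exponent n s)"
    proof (intro sum_mono mult_left_mono)
      fix s assume "s \<in> {1..n div 2}"
      then have "uncrossed_fraction n s d ^ m \<le> (q powr cut_exponent n s) ^ m"
        unfolding q_def using assms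
        by (intro power_mono uncrossed_fraction_le_powr) (auto simp: uncrossed_fraction_def)
      then show "uncrossed_fraction n s d ^ m \<le> Q powr cut_exponent n s"
        using \<open>0 \<le> q\<close> by (simp add: Q_def powr_power_commute)
    qed simp
    also have "\<dots> \<le> real n * Q + Q * (exp 5 * real n)"
      using assms True \<open>0 \<le> Q\<close> by (intro sum_binomial_mult_powr_cut_exponent_le) auto
    finally show ?thesis by (simp add: \<lambda> mult_ac)
  next
    case False
    then have "1 \<le> exp_lambda n m d * exp 5" by (simp add: \<lambda> mult_ac)
    moreover have "0 \<le> exp_lambda n m d" using \<open>0 \<le> Q\<close> by (simp add: \<lambda>)
    moreover have "measure_pmf.prob (H_star n m d) {E. \<not> hg_connected {1..n} E} \<le> 1"
      by (rule measure_pmf.prob_le_1)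
    ultimately show ?thesis by linarith
  qed
qed

theorem mainTheorem13:
  fixes n m d :: nat
  assumes "2 \<le> d" and "d \<le> n" and "1 \<le> m"
  shows "ennreal (measure_pmf.prob (H_star n m d) {E. \<not> hg_connected {1..n} E})
    \<le> ennreal (exp_lambda n m d)
       + (\<Sum>r. ennreal ((exp_lambda n m d * exp 5) ^ Suc r))
       + ennreal ((2 / exp 1) ^ n)"
proof -
  have "0 \<le> exp_lambda n m d" using assms by (simp add: exp_lambda_def)
  have "ennreal (measure_pmf.prob (H_star n m d) {E. \<not> hg_connected {1..n} E})
          \<le> ennreal (exp_lambda n m d + exp_lambda n m d * exp 5)"
    using assms by (intro ennreal_leI prob_not_hg_connected_le)
  also have "\<dots> = ennreal (exp_lambda n m d) + ennreal ((exp_lambda n m d * exp 5) ^ Suc 0)"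
    using \<open>0 \<le> exp_lambda n m d\<close> by simp
  also have "\<dots> \<le> ennreal (exp_lambda n m d) + (\<Sum>r. ennreal ((exp_lambda n m d * exp 5) ^ Suc r))"
    using sum_le_suminf[of "\<lambda>r. ennreal ((exp_lambda n m d * exp 5) ^ Suc r)" "{0}"]
    by (intro add_left_mono) (simp add: summableI)
  also have "\<dots> \<le> \<dots> + ennreal ((2 / exp 1) ^ n)" by simp
  finally show ?thesis .
qed

end
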